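(* Let $d\ge1$, $s\in(0,1)$ and $0<\lambda\le\Lambda$. Let $K:\mathbb{R}^d\to\mathbb{R}$ be a measurable kernel with $\lambda|y|^{-d-s}\le K(y)\le\Lambda|y|^{-d-s}$ and $K(y)=K(-y)$ for all $y\ne0$, and let $B=B_r(x_0)$ be an open ball with $r>0$. Then for every $x\in\partial B$ the limit \[ H_{K,B}(x)=\lim_{\varepsilon\to0^+}\int_{\mathbb{R}^d\setminus B_\varepsilon(x)}\tilde\chi_B(y)K(x-y)\,dy \] exists. Moreover, \[ \lambda r^{-s}H_{s,B_1}(e_1)\le H_{K,B}(x)\le\Lambda r^{-s}H_{s,B_1}(e_1)\qquad\text{for all }x\in\partial B, \] where \[ H_{s,B_1}(e_1)=\lim_{\varepsilon\to0^+}\int_{\mathbb{R}^d\setminus B_\varepsilon}\tilde\chi_{B_1(e_1)}(y)\frac{dy}{|y|^{d+s}} . \]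
   Context: $B_\rho(x)$ is the open ball of radius $\rho$ centred at $x$, and $B_\rho=B_\rho(0)$. $e_1$ is the first standard basis vector. $\tilde\chi_F=\chi_{\mathbb{R}^d\setminus F}-\chi_F$, where $\chi_F$ is the characteristic function of $F$. *)

theory Defs
  imports "HOL-Analysis.Analysis"
begin

definition chi_tilde :: "'a set \<Rightarrow> 'a \<Rightarrow> real" where
  "chi_tilde F y = (if y \<in> F then -1 else 1)"

definition trunc_int :: "('a::euclidean_space \<Rightarrow> real) \<Rightarrow> 'a set \<Rightarrow> 'a \<Rightarrow> real \<Rightarrow> real" where
  "trunc_int K B x \<epsilon> = (LINT y : (UNIV - ball x \<epsilon>) | lebesgue. chi_tilde B y * K (x - y))"

definition H_KB :: "('a::euclidean_space \<Rightarrow> real) \<Rightarrow> 'a set \<Rightarrow> 'a \<Rightarrow> real" where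
  "H_KB K B x = Lim (at_right 0) (trunc_int K B x)"

definition e1 :: "'a::euclidean_space" where
  "e1 = (SOME b. b \<in> Basis)"

definition H_s_B1_e1 :: "real \<Rightarrow> 'a::euclidean_space itself \<Rightarrow> real" where
  "H_s_B1_e1 s _ = Lim (at_right 0)
     (\<lambda>\<epsilon>. LINT y : (UNIV - ball (0::'a) \<epsilon>) | lebesgue.
        chi_tilde (ball (e1::'a) 1) y * (1 / norm y powr (real DIM('a) + s)))"

end

theory Submission
  imports Defs
begin

text \<open>Fix \<open>x\<close> on the sphere and let \<open>\<nu> = x - x0\<close>. Replacing \<open>chi_tilde B y\<close> by the tangent gap
  \<open>chi_tilde B y - sgn ((y - x) \<bullet> \<nu>)\<close> changes each truncated integral by the integral of a function
  that is odd under \<open>y \<mapsto> 2x - y\<close> (as \<open>K\<close> is even), i.e. not at all. The tangent gap is nonnegative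
  and lives between the ball and its tangent half-space, which near \<open>x\<close> is a cusp of width about
  \<open>|y - x|\<^sup>2 / r\<close>; on it \<open>|y - x| powr (-d-s)\<close> is integrable because \<open>s < 1\<close> (sum over dyadic
  shells). Hence dominated convergence gives the limit, and the bounds on \<open>K\<close> bound it by \<open>\<lambda>\<close> and
  \<open>\<Lambda>\<close> times the integral of the tangent gap against \<open>|x - y| powr (-d-s)\<close>. A rotation and the
  dilation by \<open>r\<close> turn this integral into \<open>r powr (-s)\<close> times the same integral for the ball
  \<open>B\<^sub>1(e\<^sub>1)\<close> at \<open>0\<close>, which is \<open>H_s_B1_e1 s\<close>.\<close>

section \<open>Lebesgue measure under rigid motions\<close>

lemma orthogonal_transformation_exists_norm_eq:
  fixes a b :: "'a::real_inner"
  assumes "norm a = norm b"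
  obtains Q where "orthogonal_transformation Q" "Q a = b"
proof (cases "a = b")
  case True
  then show ?thesis
    using that[of "\<lambda>x. x"] by simp
next
  case False
  define u where "u = a - b"
  have uu: "u \<bullet> u \<noteq> 0"
    using False by (simp add: u_def)
  define Q where "Q v = v - (2 * (v \<bullet> u) / (u \<bullet> u)) *\<^sub>R u" for v
  have "linear Q"
    by (rule linearI) (auto simp: Q_def add_divide_distrib algebra_simps)
  moreover have "Q v \<bullet> Q w = v \<bullet> w" for v w
    using uu by (simp add: Q_def inner_diff_left inner_diff_right inner_commute field_simps)
  ultimately have "orthogonal_transformation Q"
    by (simp add: orthogonal_transformation_def)
  moreover have "a \<bullet> a = b \<bullet> b"
    using assms by (simp add: dot_square_norm)
  then have "2 * (a \<bullet> u) = u \<bullet> u"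
    by (simp add: u_def inner_diff_left inner_diff_right inner_commute)
  then have "Q a = b"
    using uu by (simp add: Q_def u_def)
  ultimately show ?thesis
    using that by blast
qed

lemma emeasure_lebesgue_orthogonal_image_open:
  fixes Q :: "'a::euclidean_space \<Rightarrow> 'a"
  assumes Q: "orthogonal_transformation Q" and U: "open U"
  shows "emeasure lebesgue (Q ` U) = emeasure lebesgue U"
proof -
  \<comment> \<open>Up to a null set, \<open>U\<close> is a disjoint union of balls, and \<open>Q\<close> maps balls to balls of the same radius.\<close>
  have lin: "linear Q"
    using Q orthogonal_transformation_linear by blast
  define \<B> where "\<B> = {i::'a \<times> real. 0 < snd i \<and> ball (fst i) (snd i) \<subseteq> U}"
  have "\<exists>i. i \<in> \<B> \<and> x \<in> ball (fst i) (snd i) \<and> snd i < d" if "x \<in> U" "0 < d" for x d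
  proof -
    obtain e where "e > 0" "ball x e \<subseteq> U"
      using U \<open>x \<in> U\<close> open_contains_ball by blast
    with \<open>0 < d\<close> show ?thesis
      by (intro exI[of _ "(x, min e d / 2)"]) (auto simp: \<B>_def)
  qed
  then obtain C where C: "countable C" "C \<subseteq> \<B>"
    and disj: "pairwise (\<lambda>i j. disjnt (ball (fst i) (snd i)) (ball (fst j) (snd j))) C"
    and neg: "negligible (U - (\<Union>i\<in>C. ball (fst i) (snd i)))"
    using Vitali_covering_theorem_balls[of U \<B> fst snd] by blast
  define W where "W = (\<Union>i\<in>C. ball (fst i) (snd i))"
  have "W \<subseteq> U"
    using C by (auto simp: W_def \<B>_def)
  then have U_split: "U = W \<union> (U - W)"
    by auto
  have "open W"
    by (auto simp: W_def)
  then have W_lmeas: "W \<in> sets lebesgue"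
    by (simp add: borel_open)
  have disj': "disjoint_family_on (\<lambda>i. ball (fst i) (snd i)) C"
    using disj by (auto simp: disjoint_family_on_def pairwise_def disjnt_def)
  have "emeasure lebesgue U = emeasure lebesgue W"
    using neg W_lmeas by (subst U_split, intro emeasure_Un_null_set) (auto simp: W_def negligible_iff_null_sets)
  also have "\<dots> = (\<integral>\<^sup>+ i. emeasure lebesgue (ball (fst i) (snd i)) \<partial>count_space C)"
    unfolding W_def using C disj' by (intro emeasure_UN_countable) (auto simp: borel_open)
  also have "\<dots> = (\<integral>\<^sup>+ i. emeasure lebesgue (ball (Q (fst i)) (snd i)) \<partial>count_space C)"
  proof (rule nn_integral_cong)
    fix i
    assume "i \<in> space (count_space C)"
    then have "0 \<le> snd i"
      using C by (auto simp: \<B>_def)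
    then show "emeasure lebesgue (ball (fst i) (snd i)) = emeasure lebesgue (ball (Q (fst i)) (snd i))"
      by (metis emeasure_lebesgue_ball_conv_unit_ball)
  qed
  also have "\<dots> = emeasure lebesgue (Q ` W)"
  proof -
    have "disjoint_family_on (\<lambda>i. Q ` ball (fst i) (snd i)) C"
      using disj' orthogonal_transformation_inj[OF Q]
      by (auto simp: disjoint_family_on_def image_Int[symmetric])
    then show ?thesis
      unfolding W_def image_UN using C
      by (subst emeasure_UN_countable)
        (auto simp: image_orthogonal_transformation_ball Q borel_open)
  qed
  also have "\<dots> = emeasure lebesgue (Q ` W \<union> Q ` (U - W))"
  proof (rule emeasure_Un_null_set[symmetric])
    show "Q ` W \<in> sets lebesgue"
      using W_lmeas lin by (intro differentiable_image_in_sets_lebesgue) (auto intro: linear_imp_differentiable_on)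
    have "negligible (Q ` (U - W))"
      using neg lin by (intro negligible_differentiable_image_negligible) (auto simp: W_def intro: linear_imp_differentiable_on)
    then show "Q ` (U - W) \<in> null_sets lebesgue"
      by (simp add: negligible_iff_null_sets)
  qed
  also have "Q ` W \<union> Q ` (U - W) = Q ` U"
    using U_split by (metis image_Un)
  finally show ?thesis ..
qed

lemma borel_measurable_linear:
  fixes f :: "'a::euclidean_space \<Rightarrow> 'b::euclidean_space"
  shows "linear f \<Longrightarrow> f \<in> borel_measurable borel"
  by (intro borel_measurable_continuous_onI linear_continuous_on linear_conv_bounded_linear[THEN iffD1])

lemma lborel_distr_orthogonal_transformation:
  fixes Q :: "'a::euclidean_space \<Rightarrow> 'a"
  assumes Q: "orthogonal_transformation Q"
  shows "distr lborel borel Q = lborel"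
proof (rule lborel_eqI[symmetric])
  have lin: "linear Q"
    using Q orthogonal_transformation_linear by blast
  note [measurable] = borel_measurable_linear[OF lin]
  fix l u :: 'a
  assume "\<And>b. b \<in> Basis \<Longrightarrow> l \<bullet> b \<le> u \<bullet> b"
  then have box: "emeasure lborel (box l u) = (\<Prod>b\<in>Basis. (u - l) \<bullet> b)"
    by (simp add: emeasure_lborel_box_eq inner_diff_left)
  have vimage_box: "Q -` box l u = inv Q ` box l u"
    using orthogonal_transformation_bij[OF Q] by (simp add: bij_vimage_eq_inv_image)
  have "open (Q -` box l u)"
    using lin by (intro continuous_open_vimage) (auto simp: linear_continuous_at linear_conv_bounded_linear)
  then have "emeasure (distr lborel borel Q) (box l u) = emeasure lebesgue (Q -` box l u)"
    by (simp add: emeasure_distr borel_open)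
  also have "\<dots> = emeasure lborel (box l u)"
    using emeasure_lebesgue_orthogonal_image_open[OF orthogonal_transformation_inv[OF Q], of "box l u"]
    by (simp add: vimage_box open_box)
  finally show "emeasure (distr lborel borel Q) (box l u) = (\<Prod>b\<in>Basis. (u - l) \<bullet> b)"
    using box by simp
qed simp

lemma nn_integral_lborel_orthogonal_affine:
  fixes Q :: "'a::euclidean_space \<Rightarrow> 'a" and f :: "'a \<Rightarrow> ennreal"
  assumes Q: "orthogonal_transformation Q" and f[measurable]: "f \<in> borel_measurable borel"
    and r: "0 < r"
  shows "(\<integral>\<^sup>+ y. f y \<partial>lborel) = ennreal (r ^ DIM('a)) * (\<integral>\<^sup>+ z. f (x + r *\<^sub>R Q z) \<partial>lborel)"
proof -
  note [measurable] = borel_measurable_linear[OF orthogonal_transformation_linear[OF Q]]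
  have "(\<integral>\<^sup>+ y. f y \<partial>lborel) = (\<integral>\<^sup>+ w. ennreal (r ^ DIM('a)) * f (x + r *\<^sub>R w) \<partial>lborel)"
    using r by (subst lborel_affine[of r x]) (simp_all add: nn_integral_density nn_integral_distr)
  also have "\<dots> = ennreal (r ^ DIM('a)) * (\<integral>\<^sup>+ w. f (x + r *\<^sub>R w) \<partial>lborel)"
    by (simp add: nn_integral_cmult)
  also have "(\<integral>\<^sup>+ w. f (x + r *\<^sub>R w) \<partial>lborel) = (\<integral>\<^sup>+ z. f (x + r *\<^sub>R Q z) \<partial>lborel)"
    by (subst (1) lborel_distr_orthogonal_transformation[OF Q, symmetric]) (simp add: nn_integral_distr)
  finally show ?thesis .
qed

lemma
  fixes c :: "'a::euclidean_space"
  shows distr_lebesgue_reflection: "distr lebesgue lebesgue (\<lambda>y. c - y) = lebesgue"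
    and measurable_lebesgue_reflection: "(\<lambda>y. c - y) \<in> lebesgue \<rightarrow>\<^sub>M lebesgue"
proof -
  have reflection: "(\<lambda>y. c + (\<Sum>j\<in>Basis. ((-1) * (y \<bullet> j)) *\<^sub>R j)) = (\<lambda>y. c - y)"
    by (simp add: fun_eq_iff sum_negf euclidean_representation)
  show "distr lebesgue lebesgue (\<lambda>y. c - y) = lebesgue"
    using lebesgue_affine_euclidean[of "\<lambda>_. -1" c] unfolding reflection by (simp add: density_1)
  show "(\<lambda>y. c - y) \<in> lebesgue \<rightarrow>\<^sub>M lebesgue"
    using lebesgue_affine_measurable[of "\<lambda>_. -1" c] unfolding reflection by simp
qed

lemma integral_lebesgue_odd_eq_0:
  fixes f :: "'a::euclidean_space \<Rightarrow> real"
  assumes f: "f \<in> borel_measurable lebesgue" and odd: "\<And>y. f (c - y) = - f y"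
  shows "integral\<^sup>L lebesgue f = 0"
proof -
  have "integral\<^sup>L lebesgue f = (\<integral>y. f (c - y) \<partial>lebesgue)"
    by (subst (1) distr_lebesgue_reflection[of c, symmetric])
      (simp add: integral_distr[OF measurable_lebesgue_reflection f])
  also have "\<dots> = - integral\<^sup>L lebesgue f"
    by (simp add: odd)
  finally show ?thesis
    by simp
qed

section \<open>Integrability of the kernel on dyadic shells\<close>

abbreviation fractional_kernel :: "real \<Rightarrow> 'a::euclidean_space \<Rightarrow> real" where
  "fractional_kernel s y \<equiv> norm y powr -(real DIM('a) + s)"

lemma nn_integral_finite_by_countable_cover:
  fixes F :: "'a \<Rightarrow> real" and A :: "nat \<Rightarrow> 'a set"
  assumes cover: "S \<subseteq> (\<Union>k. A k)" and A_sets: "\<And>k. A k \<in> sets M"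
    and F_le: "\<And>k z. z \<in> A k \<Longrightarrow> F z \<le> c k"
    and A_le: "\<And>k. emeasure M (A k) \<le> ennreal (m k)"
    and c_nonneg: "\<And>k. 0 \<le> c k" and m_nonneg: "\<And>k. 0 \<le> m k"
    and summable: "summable (\<lambda>k. c k * m k)"
  shows "(\<integral>\<^sup>+ z. ennreal (indicator S z * F z) \<partial>M) < \<infinity>"
proof -
  have "ennreal (indicator S z * F z) \<le> (\<Sum>k. ennreal (c k * indicator (A k) z))" for z
  proof (cases "z \<in> S")
    case True
    then obtain k where k: "z \<in> A k"
      using cover by blast
    have "ennreal (indicator S z * F z) \<le> ennreal (c k * indicator (A k) z)"
      using True k F_le[OF k] by (simp add: ennreal_leI)
    also have "\<dots> \<le> (\<Sum>k. ennreal (c k * indicator (A k) z))"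
      using sum_le_suminf[of "\<lambda>k. ennreal (c k * indicator (A k) z)" "{k}"] by simp
    finally show ?thesis .
  qed simp
  then have "(\<integral>\<^sup>+ z. ennreal (indicator S z * F z) \<partial>M)
      \<le> (\<integral>\<^sup>+ z. (\<Sum>k. ennreal (c k * indicator (A k) z)) \<partial>M)"
    by (intro nn_integral_mono)
  also have "\<dots> = (\<Sum>k. \<integral>\<^sup>+ z. ennreal (c k) * indicator (A k) z \<partial>M)"
    using A_sets c_nonneg by (subst nn_integral_suminf) (auto simp: ennreal_mult' ennreal_indicator)
  also have "\<dots> \<le> (\<Sum>k. ennreal (c k * m k))"
  proof (intro suminf_le summableI)
    show "(\<integral>\<^sup>+ z. ennreal (c k) * indicator (A k) z \<partial>M) \<le> ennreal (c k * m k)" for k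
      using A_sets A_le[of k] c_nonneg[of k] m_nonneg[of k]
      by (simp add: nn_integral_cmult_indicator ennreal_mult mult_left_mono)
  qed
  also have "\<dots> < \<infinity>"
    using summable c_nonneg m_nonneg by (simp add: ennreal_suminf_neq_top less_top)
  finally show ?thesis .
qed

lemma dyadic_interval_exists:
  fixes t :: real
  assumes "1 \<le> t"
  obtains k :: nat where "2 ^ k \<le> t" "t < 2 ^ Suc k"
proof -
  define k where "k = nat \<lfloor>log 2 t\<rfloor>"
  have "\<lfloor>log 2 t\<rfloor> = int k"
    using assms by (simp add: k_def)
  then have "2 powr real k \<le> t \<and> t < 2 powr (real k + 1)"
    using assms floor_log_eq_powr_iff[of t 2 "int k"] by simp
  then show ?thesis
    using that[of k] by (simp add: powr_add powr_realpow)
qed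

lemma powr_minus_add_mult_power:
  fixes x :: real
  assumes "0 < x"
  shows "x powr -(real n + s) * x ^ n = x powr -s"
  using assms by (simp add: powr_realpow[symmetric] powr_add[symmetric])

lemma nn_integral_norm_powr_outside_ball_finite:
  fixes e s :: real
  assumes s: "0 < s" and e: "0 < e"
  shows "(\<integral>\<^sup>+ z. ennreal (indicator {z::'a::euclidean_space. e \<le> norm z} z * fractional_kernel s z) \<partial>lborel)
           < \<infinity>"
proof (rule nn_integral_finite_by_countable_cover)
  define V where "V = unit_ball_vol (real DIM('a))"
  show "{z::'a. e \<le> norm z} \<subseteq> (\<Union>k. {z. 2 ^ k * e \<le> norm z \<and> norm z < 2 ^ Suc k * e})"
  proof
    fix z :: 'a
    assume "z \<in> {z. e \<le> norm z}"
    then obtain k :: nat where "2 ^ k \<le> norm z / e" "norm z / e < 2 ^ Suc k"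
      using e dyadic_interval_exists[of "norm z / e"] by auto
    then show "z \<in> (\<Union>k. {z. 2 ^ k * e \<le> norm z \<and> norm z < 2 ^ Suc k * e})"
      using e by (auto simp: field_simps)
  qed
  show "fractional_kernel s z \<le> (2 ^ k * e) powr -(real DIM('a) + s)"
    if "z \<in> {z. 2 ^ k * e \<le> norm z \<and> norm z < 2 ^ Suc k * e}" for k and z :: 'a
    using that s e by (intro powr_mono2') auto
  show "emeasure lborel {z::'a. 2 ^ k * e \<le> norm z \<and> norm z < 2 ^ Suc k * e}
      \<le> ennreal (V * (2 ^ Suc k * e) ^ DIM('a))" for k
  proof -
    have "emeasure lborel {z::'a. 2 ^ k * e \<le> norm z \<and> norm z < 2 ^ Suc k * e}
        \<le> emeasure lborel (ball (0::'a) (2 ^ Suc k * e))"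
      by (intro emeasure_mono) auto
    also have "\<dots> = ennreal (V * (2 ^ Suc k * e) ^ DIM('a))"
      using e by (simp add: emeasure_ball V_def)
    finally show ?thesis .
  qed
  show "0 \<le> (2 ^ k * e) powr -(real DIM('a) + s)" for k
    by simp
  show "0 \<le> V * (2 ^ Suc k * e) ^ DIM('a)" for k
    using e by (simp add: V_def)
  have term_eq: "(2 ^ k * e) powr -(real DIM('a) + s) * (V * (2 ^ Suc k * e) ^ DIM('a))
      = V * 2 ^ DIM('a) * e powr -s * (2 powr -s) ^ k" for k :: nat
  proof -
    have "(2 ^ k * e) powr -(real DIM('a) + s) * (2 ^ k * e) ^ DIM('a) = (2 ^ k * e) powr -s"
      using e by (intro powr_minus_add_mult_power) simp
    moreover have "(2 ^ k * e) powr -s = e powr -s * (2 powr -s) ^ k"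
      using e by (simp add: powr_mult powr_realpow[symmetric] powr_powr mult.commute)
    ultimately show ?thesis
      by (simp add: power_mult_distrib mult_ac)
  qed
  show "summable (\<lambda>k. (2 ^ k * e) powr -(real DIM('a) + s) * (V * (2 ^ Suc k * e) ^ DIM('a)))"
    unfolding term_eq using s by (intro summable_mult summable_geometric) (simp add: powr_less_one)
  show "{z::'a. 2 ^ k * e \<le> norm z \<and> norm z < 2 ^ Suc k * e} \<in> sets lborel" for k
    by measurable
qed

text \<open>On the shell \<open>q/2 < |z| \<le> q\<close> the cusp lies in a box of volume \<open>2^(d-1) q^(d+1)\<close>, so the
  shell contributes \<open>O(q powr (1-s))\<close>.\<close>

lemma nn_integral_norm_powr_cusp_finite:
  fixes e :: "'a::euclidean_space" and s :: real
  assumes s: "0 < s" "s < 1" and e: "e \<in> Basis"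
  shows "(\<integral>\<^sup>+ z. ennreal (indicator {z. 0 < norm z \<and> norm z \<le> 1 \<and> 0 \<le> z \<bullet> e \<and> 2 * (z \<bullet> e) \<le> (norm z)\<^sup>2} z
            * fractional_kernel s z) \<partial>lborel) < \<infinity>"
proof (rule nn_integral_finite_by_countable_cover)
  define q :: "nat \<Rightarrow> real" where "q k = (1 / 2) ^ k" for k
  define A where "A k = {z::'a. q k / 2 < norm z \<and> norm z \<le> q k \<and> 0 \<le> z \<bullet> e \<and> 2 * (z \<bullet> e) \<le> (norm z)\<^sup>2}" for k
  have q_pos: "0 < q k" for k
    by (simp add: q_def)
  show "{z. 0 < norm z \<and> norm z \<le> 1 \<and> 0 \<le> z \<bullet> e \<and> 2 * (z \<bullet> e) \<le> (norm z)\<^sup>2} \<subseteq> (\<Union>k. A k)"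
  proof
    fix z :: 'a
    assume z: "z \<in> {z. 0 < norm z \<and> norm z \<le> 1 \<and> 0 \<le> z \<bullet> e \<and> 2 * (z \<bullet> e) \<le> (norm z)\<^sup>2}"
    then obtain k :: nat where "2 ^ k \<le> 1 / norm z" "1 / norm z < 2 ^ Suc k"
      using dyadic_interval_exists[of "1 / norm z"] by auto
    then have "q k / 2 < norm z" "norm z \<le> q k"
      using z by (auto simp: q_def field_simps)
    then show "z \<in> (\<Union>k. A k)"
      using z by (auto simp: A_def)
  qed
  show "fractional_kernel s z \<le> (q k / 2) powr -(real DIM('a) + s)" if "z \<in> A k" for k z
    using that q_pos[of k] s by (intro powr_mono2') (auto simp: A_def)
  show "emeasure lborel (A k) \<le> ennreal (2 ^ (DIM('a) - 1) * q k ^ Suc DIM('a))" for k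
  proof -
    define l :: 'a where "l = (\<Sum>b\<in>Basis. (if b = e then 0 else - q k) *\<^sub>R b)"
    define u :: 'a where "u = (\<Sum>b\<in>Basis. (if b = e then (q k)\<^sup>2 else q k) *\<^sub>R b)"
    have l: "l \<bullet> b = (if b = e then 0 else - q k)" and u: "u \<bullet> b = (if b = e then (q k)\<^sup>2 else q k)"
      if "b \<in> Basis" for b
      using that by (simp_all add: l_def u_def)
    have "A k \<subseteq> cbox l u"
    proof
      fix z
      assume "z \<in> A k"
      then have z: "norm z \<le> q k" "0 \<le> z \<bullet> e" "2 * (z \<bullet> e) \<le> (norm z)\<^sup>2"
        by (auto simp: A_def)
      have "(norm z)\<^sup>2 \<le> (q k)\<^sup>2"
        using z(1) by (simp add: power_mono)
      then have "z \<bullet> e \<le> (q k)\<^sup>2"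
        using z(2,3) by simp
      moreover have "\<bar>z \<bullet> b\<bar> \<le> q k" if "b \<in> Basis" for b
        using Basis_le_norm[OF that, of z] z(1) by simp
      ultimately show "z \<in> cbox l u"
        using z(2) by (force simp: mem_box l u abs_le_iff)
    qed
    then have "emeasure lborel (A k) \<le> emeasure lborel (cbox l u)"
      by (intro emeasure_mono) auto
    also have "\<dots> = ennreal (\<Prod>b\<in>Basis. (u - l) \<bullet> b)"
      using q_pos[of k] by (intro emeasure_lborel_cbox) (auto simp: l u)
    also have "(\<Prod>b\<in>Basis. (u - l) \<bullet> b) = (\<Prod>b\<in>Basis. if b = e then (q k)\<^sup>2 else 2 * q k)"
      by (intro prod.cong) (auto simp: inner_diff_left l u)
    also have "\<dots> = (q k)\<^sup>2 * (2 * q k) ^ (DIM('a) - 1)"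
      using e by (simp add: prod.remove card_Diff_singleton)
    also have "\<dots> = 2 ^ (DIM('a) - 1) * q k ^ Suc DIM('a)"
      using DIM_positive[where 'a='a]
      by (cases "DIM('a)") (simp_all add: power_mult_distrib power2_eq_square mult_ac)
    finally show ?thesis .
  qed
  show "0 \<le> (q k / 2) powr -(real DIM('a) + s)" for k
    by simp
  show "0 \<le> 2 ^ (DIM('a) - 1) * q k ^ Suc DIM('a)" for k
    using q_pos[of k] by simp
  have term_eq: "(q k / 2) powr -(real DIM('a) + s) * (2 ^ (DIM('a) - 1) * q k ^ Suc DIM('a))
      = 2 powr (real DIM('a) + s) * 2 ^ (DIM('a) - 1) * ((1 / 2) powr (1 - s)) ^ k" for k
  proof -
    have "(q k / 2) powr -(real DIM('a) + s) = q k powr -(real DIM('a) + s) / 2 powr -(real DIM('a) + s)"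
      by (rule powr_divide)
    also have "\<dots> = 2 powr (real DIM('a) + s) * q k powr -(real DIM('a) + s)"
      by (simp only: powr_minus divide_inverse inverse_inverse_eq mult.commute)
    finally have "(q k / 2) powr -(real DIM('a) + s) = 2 powr (real DIM('a) + s) * q k powr -(real DIM('a) + s)" .
    moreover have "q k powr -(real DIM('a) + s) * q k ^ Suc DIM('a) = q k powr (1 - s)"
      using powr_minus_add_mult_power[OF q_pos[of k], of "Suc DIM('a)" "s - 1"] by simp
    moreover have "q k powr (1 - s) = ((1 / 2) powr (1 - s)) ^ k"
      by (simp add: q_def powr_realpow[symmetric] powr_powr mult.commute)
    ultimately show ?thesis
      by (simp add: mult_ac)
  qed
  show "summable (\<lambda>k. (q k / 2) powr -(real DIM('a) + s) * (2 ^ (DIM('a) - 1) * q k ^ Suc DIM('a)))"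
    unfolding term_eq using s by (intro summable_mult summable_geometric) (simp add: powr01_less_one)
  show "A k \<in> sets lborel" for k
    unfolding A_def by measurable
qed

section \<open>The tangent gap of a ball\<close>

text \<open>For \<open>x\<close> on the sphere, \<open>sgn ((y - x) \<bullet> (x - x0))\<close> is \<open>chi_tilde\<close> of the open half-space that
  contains the ball and is bounded by the tangent hyperplane at \<open>x\<close>, except that it is \<open>0\<close> on that
  hyperplane.\<close>

definition tangent_gap :: "'a::real_inner \<Rightarrow> real \<Rightarrow> 'a \<Rightarrow> 'a \<Rightarrow> real" where
  "tangent_gap x0 r x y = chi_tilde (ball x0 r) y - sgn ((y - x) \<bullet> (x - x0))"

lemma tangent_gap_nonneg:
  fixes x0 x y :: "'a::real_inner"
  assumes "dist x0 x = r"
  shows "0 \<le> tangent_gap x0 r x y"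
proof (cases "y \<in> ball x0 r")
  case True
  then have "norm (y - x0) < norm (x - x0)"
    using assms by (simp add: dist_norm norm_minus_commute)
  then have "norm (y - x0) * norm (x - x0) < norm (x - x0) * norm (x - x0)"
    by (intro mult_strict_right_mono) auto
  then have "(y - x0) \<bullet> (x - x0) < (x - x0) \<bullet> (x - x0)"
    using norm_cauchy_schwarz[of "y - x0" "x - x0"] by (simp add: dot_square_norm power2_eq_square)
  then have "(y - x) \<bullet> (x - x0) < 0"
    by (simp add: inner_diff_left)
  with True show ?thesis
    by (simp add: tangent_gap_def chi_tilde_def)
next
  case False
  then show ?thesis
    by (simp add: tangent_gap_def chi_tilde_def sgn_if)
qed

lemma tangent_gap_le_2: "tangent_gap x0 r x y \<le> 2"
  by (simp add: tangent_gap_def chi_tilde_def sgn_if)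

lemma tangent_gap_pos_imp:
  assumes "0 < tangent_gap x0 r x y"
  shows "y \<notin> ball x0 r" "(y - x) \<bullet> (x - x0) \<le> 0"
  using assms by (auto simp: tangent_gap_def chi_tilde_def sgn_if split: if_splits)

lemma tangent_gap_borel_measurable [measurable]:
  "tangent_gap x0 r x \<in> borel_measurable (borel :: 'a::euclidean_space measure)"
proof -
  have [measurable]: "ball x0 r \<in> sets (borel :: 'a measure)"
    by (simp add: borel_open)
  show ?thesis
    unfolding tangent_gap_def[abs_def] chi_tilde_def by measurable
qed

lemma tangent_gap_lebesgue_measurable [measurable]:
  "tangent_gap x0 r x \<in> borel_measurable lebesgue"
  by (intro measurable_completion) simp

lemma tangent_gap_rigid_motion:
  fixes x0 x e z :: "'a::euclidean_space"
  assumes Q: "orthogonal_transformation Q" and x: "x - x0 = - (r *\<^sub>R Q e)" and r: "0 < r"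
  shows "tangent_gap x0 r x (x + r *\<^sub>R Q z) = tangent_gap e 1 0 z"
proof -
  have lin: "linear Q"
    using Q orthogonal_transformation_linear by blast
  have "x + r *\<^sub>R Q z - x0 = r *\<^sub>R Q (z - e)"
    using x by (simp add: linear_diff[OF lin] algebra_simps)
  then have "dist x0 (x + r *\<^sub>R Q z) = norm (r *\<^sub>R Q (z - e))"
    by (metis dist_commute dist_norm)
  also have "\<dots> = r * dist e z"
    using r Q by (simp add: dist_norm norm_minus_commute orthogonal_transformation_norm)
  finally have "dist x0 (x + r *\<^sub>R Q z) = r * dist e z" .
  then have ball: "x + r *\<^sub>R Q z \<in> ball x0 r \<longleftrightarrow> z \<in> ball e 1"
    using r by simp
  have "(x + r *\<^sub>R Q z - x) \<bullet> (x - x0) = r\<^sup>2 * ((z - 0) \<bullet> (0 - e))"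
    using Q by (simp add: x orthogonal_transformation_def power2_eq_square)
  then have "sgn ((x + r *\<^sub>R Q z - x) \<bullet> (x - x0)) = sgn ((z - 0) \<bullet> (0 - e))"
    using r by (simp add: sgn_mult)
  with ball show ?thesis
    by (simp add: tangent_gap_def chi_tilde_def)
qed

lemma e1_in_Basis: "(e1::'a::euclidean_space) \<in> Basis"
  unfolding e1_def by (rule someI_ex) (use nonempty_Basis in blast)

lemma norm_e1 [simp]: "norm (e1::'a::euclidean_space) = 1"
  by (rule norm_Basis[OF e1_in_Basis])

lemma nn_integral_tangent_gap_model_finite:
  fixes e :: "'a::euclidean_space"
  assumes s: "0 < s" "s < 1" and e: "e \<in> Basis"
  shows "(\<integral>\<^sup>+ z. ennreal (tangent_gap e 1 0 z * fractional_kernel s z) \<partial>lborel) < \<infinity>"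
proof -
  define Far where "Far = {z::'a. 1 \<le> norm z}"
  define Cusp where "Cusp = {z::'a. 0 < norm z \<and> norm z \<le> 1 \<and> 0 \<le> z \<bullet> e \<and> 2 * (z \<bullet> e) \<le> (norm z)\<^sup>2}"
  have "ennreal (tangent_gap e 1 0 z * fractional_kernel s z)
      \<le> 2 * ennreal (indicator Far z * fractional_kernel s z) + 2 * ennreal (indicator Cusp z * fractional_kernel s z)"
    for z :: 'a
  proof (cases "0 < tangent_gap e 1 0 z \<and> z \<noteq> 0")
    case True
    then have "1 \<le> dist e z" "0 \<le> z \<bullet> e"
      using tangent_gap_pos_imp[of e 1 0 z] by auto
    moreover have "(dist e z)\<^sup>2 = (norm z)\<^sup>2 - 2 * (z \<bullet> e) + 1"
      using e by (simp add: dist_norm power2_norm_eq_inner inner_diff_left inner_diff_right inner_commute)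
    ultimately have "0 \<le> z \<bullet> e" "2 * (z \<bullet> e) \<le> (norm z)\<^sup>2"
      using one_le_power[of "dist e z" 2] by linarith+
    with True have "z \<in> Far \<or> z \<in> Cusp"
      by (auto simp: Far_def Cusp_def)
    moreover have "tangent_gap e 1 0 z * fractional_kernel s z \<le> 2 * fractional_kernel s z"
      by (intro mult_right_mono tangent_gap_le_2) simp
    then have "ennreal (tangent_gap e 1 0 z * fractional_kernel s z) \<le> 2 * ennreal (fractional_kernel s z)"
      using ennreal_leI by (fastforce simp: ennreal_mult)
    ultimately show ?thesis
      by (auto intro: add_increasing add_increasing2)
  next
    case False
    then have "tangent_gap e 1 0 z * fractional_kernel s z = 0"
      using tangent_gap_nonneg[of e 0 1 z] norm_Basis[OF e] by auto
    then show ?thesis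
      by (simp only: ennreal_0 zero_le)
  qed
  then have "(\<integral>\<^sup>+ z. ennreal (tangent_gap e 1 0 z * fractional_kernel s z) \<partial>lborel)
      \<le> (\<integral>\<^sup>+ z. 2 * ennreal (indicator Far z * fractional_kernel s z)
                 + 2 * ennreal (indicator Cusp z * fractional_kernel s z) \<partial>lborel)"
    by (intro nn_integral_mono)
  also have "\<dots> = 2 * (\<integral>\<^sup>+ z. ennreal (indicator Far z * fractional_kernel s z) \<partial>lborel)
                 + 2 * (\<integral>\<^sup>+ z. ennreal (indicator Cusp z * fractional_kernel s z) \<partial>lborel)"
    unfolding Far_def Cusp_def by (subst nn_integral_add) (auto simp: nn_integral_cmult)
  also have "\<dots> < \<infinity>"
    using nn_integral_norm_powr_outside_ball_finite[OF s(1) zero_less_one, where 'a='a]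
      nn_integral_norm_powr_cusp_finite[OF s e]
    unfolding Far_def Cusp_def by (simp add: ennreal_mult_less_top)
  finally show ?thesis .
qed

lemma nn_integral_tangent_gap_scaling:
  fixes x0 x e :: "'a::euclidean_space"
  assumes r: "0 < r" and x: "dist x0 x = r" and e: "norm e = 1"
  shows "(\<integral>\<^sup>+ y. ennreal (tangent_gap x0 r x y * fractional_kernel s (x - y)) \<partial>lborel)
       = ennreal (r powr -s) * (\<integral>\<^sup>+ z. ennreal (tangent_gap e 1 0 z * fractional_kernel s z) \<partial>lborel)"
proof -
  have "norm e = norm (- ((1 / r) *\<^sub>R (x - x0)))"
    using r x e by (simp add: dist_norm norm_minus_commute)
  then obtain Q where Q: "orthogonal_transformation Q" and Qe: "Q e = - ((1 / r) *\<^sub>R (x - x0))"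
    by (rule orthogonal_transformation_exists_norm_eq)
  have x_x0: "x - x0 = - (r *\<^sub>R Q e)"
    using r by (simp add: Qe)
  have integrand: "ennreal (tangent_gap x0 r x (x + r *\<^sub>R Q z) * fractional_kernel s (x - (x + r *\<^sub>R Q z)))
      = ennreal (r powr -(real DIM('a) + s)) * ennreal (tangent_gap e 1 0 z * fractional_kernel s z)" for z
  proof -
    have "tangent_gap x0 r x (x + r *\<^sub>R Q z) * fractional_kernel s (x - (x + r *\<^sub>R Q z))
        = r powr -(real DIM('a) + s) * (tangent_gap e 1 0 z * fractional_kernel s z)"
      using r by (simp add: tangent_gap_rigid_motion[OF Q x_x0 r] orthogonal_transformation_norm[OF Q] powr_mult mult_ac)
    then show ?thesis
      by (simp add: ennreal_mult')
  qed
  have "(\<integral>\<^sup>+ y. ennreal (tangent_gap x0 r x y * fractional_kernel s (x - y)) \<partial>lborel)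
      = ennreal (r ^ DIM('a)) * (\<integral>\<^sup>+ z. ennreal (r powr -(real DIM('a) + s))
            * ennreal (tangent_gap e 1 0 z * fractional_kernel s z) \<partial>lborel)"
    unfolding integrand[symmetric] by (rule nn_integral_lborel_orthogonal_affine[OF Q _ r]) simp
  also have "\<dots> = ennreal (r ^ DIM('a) * r powr -(real DIM('a) + s))
            * (\<integral>\<^sup>+ z. ennreal (tangent_gap e 1 0 z * fractional_kernel s z) \<partial>lborel)"
    using r by (simp add: nn_integral_cmult ennreal_mult mult.assoc)
  also have "r ^ DIM('a) * r powr -(real DIM('a) + s) = r powr -s"
    using powr_minus_add_mult_power[OF r] by (simp add: mult.commute)
  finally show ?thesis .
qed

lemma integrable_tangent_gap_fractional_kernel:
  fixes x0 x :: "'a::euclidean_space"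
  assumes s: "0 < s" "s < 1" and r: "0 < r" and x: "dist x0 x = r"
  shows "integrable lebesgue (\<lambda>y. tangent_gap x0 r x y * fractional_kernel s (x - y))"
proof (rule integrableI_nonneg)
  show "(\<lambda>y. tangent_gap x0 r x y * fractional_kernel s (x - y)) \<in> borel_measurable lebesgue"
    by (intro measurable_completion) measurable
  show "AE y in lebesgue. 0 \<le> tangent_gap x0 r x y * fractional_kernel s (x - y)"
    using tangent_gap_nonneg[OF x] by simp
  show "(\<integral>\<^sup>+ y. ennreal (tangent_gap x0 r x y * fractional_kernel s (x - y)) \<partial>lebesgue) < \<infinity>"
    using nn_integral_tangent_gap_scaling[OF r x norm_e1, of s]
      nn_integral_tangent_gap_model_finite[OF s e1_in_Basis, where 'a='a]
    by (simp add: nn_integral_completion ennreal_mult_less_top)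
qed

lemma integral_tangent_gap_scaling:
  fixes x0 x e :: "'a::euclidean_space"
  assumes r: "0 < r" and x: "dist x0 x = r" and e: "norm e = 1"
  shows "(\<integral>y. tangent_gap x0 r x y * fractional_kernel s (x - y) \<partial>lebesgue)
       = r powr -s * (\<integral>z. tangent_gap e 1 0 z * fractional_kernel s z \<partial>lebesgue)"
proof -
  have "dist e 0 = 1"
    using e by simp
  note nonneg = tangent_gap_nonneg[OF x] tangent_gap_nonneg[OF this]
  have "(\<integral>y. tangent_gap x0 r x y * fractional_kernel s (x - y) \<partial>lebesgue)
      = enn2real (\<integral>\<^sup>+ y. ennreal (tangent_gap x0 r x y * fractional_kernel s (x - y)) \<partial>lborel)"
    using nonneg by (subst integral_eq_nn_integral) (auto intro: measurable_completion simp: nn_integral_completion)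
  also have "\<dots> = r powr -s * enn2real (\<integral>\<^sup>+ z. ennreal (tangent_gap e 1 0 z * fractional_kernel s z) \<partial>lborel)"
    unfolding nn_integral_tangent_gap_scaling[OF r x e] by (simp add: enn2real_mult)
  also have "enn2real (\<integral>\<^sup>+ z. ennreal (tangent_gap e 1 0 z * fractional_kernel s z) \<partial>lborel)
      = (\<integral>z. tangent_gap e 1 0 z * fractional_kernel s z \<partial>lebesgue)"
    using nonneg by (subst integral_eq_nn_integral) (auto intro: measurable_completion simp: nn_integral_completion)
  finally show ?thesis .
qed

section \<open>Principal values for stable-like kernels\<close>

lemma tendsto_integral_outside_ball:
  fixes G :: "'a::euclidean_space \<Rightarrow> real"
  assumes G: "integrable lebesgue G"
  shows "((\<lambda>\<epsilon>. LINT y : (UNIV - ball x \<epsilon>) | lebesgue. G y) \<longlongrightarrow> integral\<^sup>L lebesgue G) (at_right 0)"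
proof -
  have [measurable]: "G \<in> borel_measurable lebesgue" "ball x \<epsilon> \<in> sets lebesgue" for \<epsilon>
    using G by (auto simp: borel_open)
  have "((\<lambda>t. \<integral>y. indicator (UNIV - ball x (inverse t)) y * G y \<partial>lebesgue) \<longlongrightarrow> integral\<^sup>L lebesgue G) at_top"
  proof (rule integral_dominated_convergence_at_top[where w="\<lambda>y. norm (G y)"])
    show "AE y in lebesgue. ((\<lambda>t. indicator (UNIV - ball x (inverse t)) y * G y) \<longlongrightarrow> G y) at_top"
      using AE_completion[OF AE_lborel_singleton[of x]]
    proof eventually_elim
      case (elim y)
      then have "0 < dist x y"
        by simp
      have "\<forall>\<^sub>F t in at_top. indicator (UNIV - ball x (inverse t)) y * G y = G y"
        using eventually_gt_at_top[of "inverse (dist x y)"]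
      proof eventually_elim
        case (elim t)
        then have "inverse t < dist x y"
          using less_imp_inverse_less[OF elim] \<open>0 < dist x y\<close> by simp
        then show ?case
          by simp
      qed
      then show ?case
        by (rule tendsto_eventually)
    qed
  qed (auto intro: integrable_abs[OF G] split: split_indicator)
  then show ?thesis
    by (simp add: filterlim_at_top_to_right set_lebesgue_integral_def)
qed

lemma integrable_fractional_kernel_outside_ball:
  fixes x :: "'a::euclidean_space"
  assumes s: "0 < s" and e: "0 < e"
  shows "integrable lebesgue (\<lambda>y. indicator (UNIV - ball x e) y * fractional_kernel s (x - y))"
proof (rule integrableI_nonneg)
  have [measurable]: "ball x e \<in> sets borel"
    by (simp add: borel_open)
  show "(\<lambda>y. indicator (UNIV - ball x e) y * fractional_kernel s (x - y)) \<in> borel_measurable lebesgue"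
    by (intro measurable_completion) measurable
  have "(\<integral>\<^sup>+ y. ennreal (indicator (UNIV - ball x e) y * fractional_kernel s (x - y)) \<partial>lborel)
      = (\<integral>\<^sup>+ z. ennreal (indicator {z::'a. e \<le> norm z} z * fractional_kernel s z) \<partial>lborel)"
    using nn_integral_lborel_orthogonal_affine[OF orthogonal_transformation_id _ zero_less_one,
        of "\<lambda>y. ennreal (indicator (UNIV - ball x e) y * fractional_kernel s (x - y))" x]
    by (simp add: dist_norm indicator_def not_less)
  then show "(\<integral>\<^sup>+ y. ennreal (indicator (UNIV - ball x e) y * fractional_kernel s (x - y)) \<partial>lebesgue) < \<infinity>"
    using nn_integral_norm_powr_outside_ball_finite[OF s e] by (simp add: nn_integral_completion)
qed simp

locale stable_like_kernel =
  fixes K :: "'a::euclidean_space \<Rightarrow> real" and s lam Lam :: real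
  assumes s_pos: "0 < s" and s_less_1: "s < 1" and lam_nonneg: "0 \<le> lam"
    and K_measurable [measurable]: "K \<in> borel_measurable lebesgue"
    and K_lower: "\<And>y. y \<noteq> 0 \<Longrightarrow> lam * fractional_kernel s y \<le> K y"
    and K_upper: "\<And>y. y \<noteq> 0 \<Longrightarrow> K y \<le> Lam * fractional_kernel s y"
    and K_even: "\<And>y. y \<noteq> 0 \<Longrightarrow> K (- y) = K y"
begin

lemma abs_K_le: "y \<noteq> 0 \<Longrightarrow> \<bar>K y\<bar> \<le> Lam * fractional_kernel s y"
  using K_lower[of y] K_upper[of y] lam_nonneg by (smt (verit) mult_nonneg_nonneg powr_ge_zero)

lemma Lam_nonneg: "0 \<le> Lam"
proof -
  obtain b :: 'a where b: "b \<in> Basis"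
    using nonempty_Basis by blast
  then have "lam \<le> Lam"
    using K_lower[of b] K_upper[of b] by (simp add: nonzero_Basis)
  with lam_nonneg show ?thesis
    by simp
qed

lemma K_reflected_measurable [measurable]: "(\<lambda>y. K (x - y)) \<in> borel_measurable lebesgue"
  using measurable_compose[OF measurable_lebesgue_reflection K_measurable] by simp

lemma integrable_tangent_gap_mult_K:
  assumes r: "0 < r" and x: "dist x0 x = r"
  shows "integrable lebesgue (\<lambda>y. tangent_gap x0 r x y * K (x - y))"
proof (rule Bochner_Integration.integrable_bound)
  show "integrable lebesgue (\<lambda>y. Lam * (tangent_gap x0 r x y * fractional_kernel s (x - y)))"
    using integrable_tangent_gap_fractional_kernel[OF s_pos s_less_1 r x] by (rule integrable_mult_right)
  show "(\<lambda>y. tangent_gap x0 r x y * K (x - y)) \<in> borel_measurable lebesgue"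
    by measurable
  show "AE y in lebesgue. norm (tangent_gap x0 r x y * K (x - y))
      \<le> norm (Lam * (tangent_gap x0 r x y * fractional_kernel s (x - y)))"
    using AE_completion[OF AE_lborel_singleton[of x]]
  proof eventually_elim
    case (elim y)
    then have "tangent_gap x0 r x y * \<bar>K (x - y)\<bar> \<le> tangent_gap x0 r x y * (Lam * fractional_kernel s (x - y))"
      using abs_K_le[of "x - y"] tangent_gap_nonneg[OF x] by (intro mult_left_mono) auto
    then show ?case
      using tangent_gap_nonneg[OF x, of y] Lam_nonneg by (simp add: abs_mult mult_ac)
  qed
qed

lemma trunc_int_eq_set_integral_tangent_gap:
  assumes \<epsilon>: "0 < \<epsilon>"
  shows "trunc_int K (ball x0 r) x \<epsilon> = (LINT y : (UNIV - ball x \<epsilon>) | lebesgue. tangent_gap x0 r x y * K (x - y))"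
proof -
  define A where "A = UNIV - ball x \<epsilon>"
  have [measurable]: "A \<in> sets lebesgue"
    by (simp add: A_def borel_open)
  have sgn_measurable [measurable]: "(\<lambda>y. sgn ((y - x) \<bullet> (x - x0))) \<in> borel_measurable lebesgue"
    by (intro measurable_completion) simp
  have integrable_on_A: "integrable lebesgue (\<lambda>y. indicator A y * (f y * K (x - y)))"
    if [measurable]: "f \<in> borel_measurable lebesgue" and f_le: "\<And>y. \<bar>f y\<bar> \<le> 2" for f
  proof (rule Bochner_Integration.integrable_bound)
    show "integrable lebesgue (\<lambda>y. 2 * Lam * (indicator A y * fractional_kernel s (x - y)))"
      using integrable_fractional_kernel_outside_ball[OF s_pos \<epsilon>, of x]
      unfolding A_def by (rule integrable_mult_right)
    show "AE y in lebesgue. norm (indicator A y * (f y * K (x - y)))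
        \<le> norm (2 * Lam * (indicator A y * fractional_kernel s (x - y)))"
    proof (intro AE_I2)
      fix y
      show "norm (indicator A y * (f y * K (x - y))) \<le> norm (2 * Lam * (indicator A y * fractional_kernel s (x - y)))"
      proof (cases "y \<in> A")
        case True
        then have "x - y \<noteq> 0"
          using \<epsilon> by (auto simp: A_def)
        then have "\<bar>f y\<bar> * \<bar>K (x - y)\<bar> \<le> 2 * (Lam * fractional_kernel s (x - y))"
          using f_le[of y] abs_K_le[of "x - y"] by (intro mult_mono) auto
        with True Lam_nonneg show ?thesis
          by (simp add: abs_mult mult_ac)
      qed simp
    qed
  qed measurable
  define odd where "odd y = indicator A y * (sgn ((y - x) \<bullet> (x - x0)) * K (x - y))" for y
  have odd_reflect: "odd (x + x - y) = - odd y" for y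
  proof (cases "y = x")
    case False
    have "dist x (x + x - y) = dist x y"
      by (simp add: dist_norm norm_minus_commute)
    moreover have "K (x - (x + x - y)) = K (x - y)"
      using K_even[of "x - y"] False by simp
    moreover have "(x + x - y - x) \<bullet> (x - x0) = - ((y - x) \<bullet> (x - x0))"
      by (simp add: inner_diff_left)
    ultimately show ?thesis
      by (simp add: odd_def A_def indicator_def sgn_minus)
  qed (simp add: odd_def)
  have odd_0: "integral\<^sup>L lebesgue odd = 0"
    by (rule integral_lebesgue_odd_eq_0[where f=odd and c="x + x", OF _ odd_reflect]) (unfold odd_def[abs_def], measurable)
  have "trunc_int K (ball x0 r) x \<epsilon>
      = (\<integral>y. indicator A y * (tangent_gap x0 r x y * K (x - y)) + odd y \<partial>lebesgue)"
    unfolding trunc_int_def set_lebesgue_integral_def A_def[symmetric]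
    by (intro Bochner_Integration.integral_cong) (simp_all add: tangent_gap_def odd_def algebra_simps)
  also have "\<dots> = (\<integral>y. indicator A y * (tangent_gap x0 r x y * K (x - y)) \<partial>lebesgue)"
  proof -
    have "integrable lebesgue (\<lambda>y. indicator A y * (tangent_gap x0 r x y * K (x - y)))"
      by (rule integrable_on_A) (measurable, simp add: tangent_gap_def chi_tilde_def sgn_if)
    moreover have "integrable lebesgue odd"
      unfolding odd_def by (rule integrable_on_A[OF sgn_measurable]) (simp add: sgn_if)
    ultimately show ?thesis
      using odd_0 by simp
  qed
  finally show ?thesis
    by (simp add: set_lebesgue_integral_def A_def)
qed

lemma tendsto_trunc_int:
  assumes r: "0 < r" and x: "dist x0 x = r"
  shows "(trunc_int K (ball x0 r) x \<longlongrightarrow> (\<integral>y. tangent_gap x0 r x y * K (x - y) \<partial>lebesgue)) (at_right 0)"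
proof -
  have "\<forall>\<^sub>F \<epsilon> in at_right 0. (LINT y : (UNIV - ball x \<epsilon>) | lebesgue. tangent_gap x0 r x y * K (x - y))
      = trunc_int K (ball x0 r) x \<epsilon>"
    using eventually_at_right_less by eventually_elim (simp add: trunc_int_eq_set_integral_tangent_gap)
  with tendsto_integral_outside_ball[OF integrable_tangent_gap_mult_K[OF r x]] show ?thesis
    by (rule Lim_transform_eventually)
qed

lemma integral_tangent_gap_mult_K_bounds:
  assumes r: "0 < r" and x: "dist x0 x = r"
  defines "c \<equiv> \<integral>y. tangent_gap x0 r x y * fractional_kernel s (x - y) \<partial>lebesgue"
  shows "lam * c \<le> (\<integral>y. tangent_gap x0 r x y * K (x - y) \<partial>lebesgue)"
    and "(\<integral>y. tangent_gap x0 r x y * K (x - y) \<partial>lebesgue) \<le> Lam * c"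
proof -
  have "AE y in lebesgue. lam * (tangent_gap x0 r x y * fractional_kernel s (x - y)) \<le> tangent_gap x0 r x y * K (x - y)
      \<and> tangent_gap x0 r x y * K (x - y) \<le> Lam * (tangent_gap x0 r x y * fractional_kernel s (x - y))"
    using AE_completion[OF AE_lborel_singleton[of x]]
  proof eventually_elim
    case (elim y)
    then have "tangent_gap x0 r x y * (lam * fractional_kernel s (x - y)) \<le> tangent_gap x0 r x y * K (x - y)"
      and "tangent_gap x0 r x y * K (x - y) \<le> tangent_gap x0 r x y * (Lam * fractional_kernel s (x - y))"
      using K_lower[of "x - y"] K_upper[of "x - y"] tangent_gap_nonneg[OF x, of y] by (auto intro: mult_left_mono)
    then show ?case
      by (simp add: mult_ac)
  qed
  note AE_bounds = this
  note integrable = integrable_tangent_gap_fractional_kernel[OF s_pos s_less_1 r x] integrable_tangent_gap_mult_K[OF r x]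
  have "(\<integral>y. lam * (tangent_gap x0 r x y * fractional_kernel s (x - y)) \<partial>lebesgue)
      \<le> (\<integral>y. tangent_gap x0 r x y * K (x - y) \<partial>lebesgue)"
  proof (rule integral_mono_AE)
    show "AE y in lebesgue. lam * (tangent_gap x0 r x y * fractional_kernel s (x - y)) \<le> tangent_gap x0 r x y * K (x - y)"
      using AE_bounds by eventually_elim simp
  qed (use integrable in auto)
  moreover have "(\<integral>y. tangent_gap x0 r x y * K (x - y) \<partial>lebesgue)
      \<le> (\<integral>y. Lam * (tangent_gap x0 r x y * fractional_kernel s (x - y)) \<partial>lebesgue)"
  proof (rule integral_mono_AE)
    show "AE y in lebesgue. tangent_gap x0 r x y * K (x - y) \<le> Lam * (tangent_gap x0 r x y * fractional_kernel s (x - y))"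
      using AE_bounds by eventually_elim simp
  qed (use integrable in auto)
  ultimately show "lam * c \<le> (\<integral>y. tangent_gap x0 r x y * K (x - y) \<partial>lebesgue)"
    and "(\<integral>y. tangent_gap x0 r x y * K (x - y) \<partial>lebesgue) \<le> Lam * c"
    by (simp_all add: c_def)
qed

end

lemma H_s_B1_e1_eq_integral:
  assumes s: "0 < s" "s < 1"
  shows "H_s_B1_e1 s TYPE('a::euclidean_space)
       = (\<integral>z. tangent_gap e1 1 (0::'a) z * fractional_kernel s z \<partial>lebesgue)"
proof -
  interpret stable_like_kernel "fractional_kernel s :: 'a \<Rightarrow> real" s 1 1
    using s by unfold_locales (auto intro: measurable_completion)
  have kernel_eq: "fractional_kernel s y = 1 / norm y powr (real DIM('a) + s)" for y :: 'a
    by (rule powr_minus_divide)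
  have "dist e1 (0::'a) = 1"
    by simp
  note lim = tendsto_trunc_int[OF zero_less_one this]
  have "H_s_B1_e1 s TYPE('a) = Lim (at_right 0) (trunc_int (fractional_kernel s) (ball e1 1) (0::'a))"
    unfolding H_s_B1_e1_def trunc_int_def kernel_eq by simp
  also have "\<dots> = (\<integral>y. tangent_gap e1 1 0 y * fractional_kernel s ((0::'a) - y) \<partial>lebesgue)"
    using lim by (intro tendsto_Lim) simp_all
  finally show ?thesis
    by simp
qed

theorem lemma2p1:
  fixes K :: "'a::euclidean_space \<Rightarrow> real"
    and s lam Lam r :: real and x0 :: 'a
  assumes "0 < s" "s < 1" "0 < lam" "lam \<le> Lam"
    and "K \<in> borel_measurable lebesgue"
    and "\<forall>y. y \<noteq> 0 \<longrightarrow> lam * norm y powr (-(real DIM('a) + s)) \<le> K y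
                      \<and> K y \<le> Lam * norm y powr (-(real DIM('a) + s))"
    and "\<forall>y. y \<noteq> 0 \<longrightarrow> K y = K (-y)"
    and "0 < r"
  shows "\<forall>x \<in> frontier (ball x0 r).
           (\<exists>L. (trunc_int K (ball x0 r) x \<longlongrightarrow> L) (at_right 0))
         \<and> lam * r powr (-s) * H_s_B1_e1 s TYPE('a) \<le> H_KB K (ball x0 r) x
         \<and> H_KB K (ball x0 r) x \<le> Lam * r powr (-s) * H_s_B1_e1 s TYPE('a)"
proof
  fix x
  assume "x \<in> frontier (ball x0 r)"
  with \<open>0 < r\<close> have x: "dist x0 x = r"
    by simp
  interpret stable_like_kernel K s lam Lam
  proof
    show "\<And>y. y \<noteq> 0 \<Longrightarrow> lam * fractional_kernel s y \<le> K y"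
      and "\<And>y. y \<noteq> 0 \<Longrightarrow> K y \<le> Lam * fractional_kernel s y"
      using assms(6) by auto
    show "\<And>y. y \<noteq> 0 \<Longrightarrow> K (- y) = K y"
      using assms(7) by metis
  qed (use assms(1-3,5) in auto)
  define I where "I = (\<integral>y. tangent_gap x0 r x y * K (x - y) \<partial>lebesgue)"
  have lim: "(trunc_int K (ball x0 r) x \<longlongrightarrow> I) (at_right 0)"
    unfolding I_def using \<open>0 < r\<close> x by (rule tendsto_trunc_int)
  then have "H_KB K (ball x0 r) x = I"
    unfolding H_KB_def by (intro tendsto_Lim) simp_all
  moreover have "(\<integral>y. tangent_gap x0 r x y * fractional_kernel s (x - y) \<partial>lebesgue)
      = r powr -s * H_s_B1_e1 s TYPE('a)"
    using integral_tangent_gap_scaling[OF \<open>0 < r\<close> x norm_e1] H_s_B1_e1_eq_integral[OF s_pos s_less_1, where 'a='a]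
    by simp
  ultimately show "(\<exists>L. (trunc_int K (ball x0 r) x \<longlongrightarrow> L) (at_right 0))
      \<and> lam * r powr (-s) * H_s_B1_e1 s TYPE('a) \<le> H_KB K (ball x0 r) x
      \<and> H_KB K (ball x0 r) x \<le> Lam * r powr (-s) * H_s_B1_e1 s TYPE('a)"
    using lim integral_tangent_gap_mult_K_bounds[OF \<open>0 < r\<close> x] by (auto simp: I_def mult.assoc)
qed

end
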